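(* Let $\phi$ be a reflexive $(\sigma,\varepsilon)$-sesquilinear form on a right vector space $V$ over a division ring $K$, not identically zero, and suppose there exists a nonzero isotropic vector. Then $V$ is spanned by its isotropic vectors if and only if both (a) $\phi$ is trace-valued, and (b) there exists an isotropic vector not contained in $\mathrm{Rad}(\phi)$.
   Context: Let $K$ be a division ring, $\sigma$ an anti-automorphism of $K$ and $\varepsilon\in K^*$ with $\varepsilon^{\sigma}=\varepsilon^{-1}$ and $t^{\sigma^2}=\varepsilon t\varepsilon^{-1}$ for all $t\in K$. For a right $K$-vector space $V$, a reflexive $(\sigma,\varepsilon)$-sesquilinear form is a map $\phi:V\times V\to K$ with $\phi(x,y\alpha+z\beta)=\phi(x,y)\alpha+\phi(x,z)\beta$ and $\phi(y,x)=\phi(x,y)^{\sigma}\varepsilon$ for all $x,y,z\in V$, $\alpha,\beta\in K$. A vector $a$ is isotropic if $\phi(a,a)=0$. $\mathrm{Rad}(\phi)=\{a\in V:\phi(a,x)=0\ \forall x\in V\}$. The form $\phi$ is trace-valued if $\phi(x,x)\in\{t+t^{\sigma}\varepsilon: t\in K\}$ for every $x\in V$. *)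

theory Defs
  imports Main
begin

text \<open>A right vector space: the type 'v (an abelian group) with a right scalar
  multiplication by the division ring 'k, written smul x a for x a.\<close>
definition right_vector_space :: "('v::ab_group_add \<Rightarrow> 'k::division_ring \<Rightarrow> 'v) \<Rightarrow> bool" where
  "right_vector_space smul \<longleftrightarrow>
     (\<forall>x y a. smul (x + y) a = smul x a + smul y a) \<and>
     (\<forall>x a b. smul x (a + b) = smul x a + smul x b) \<and>
     (\<forall>x a b. smul x (a * b) = smul (smul x a) b) \<and>
     (\<forall>x. smul x 1 = x)"

definition anti_automorphism :: "('k::division_ring \<Rightarrow> 'k) \<Rightarrow> bool" where
  "anti_automorphism \<sigma> \<longleftrightarrow> bij \<sigma> \<and>
     (\<forall>a b. \<sigma> (a + b) = \<sigma> a + \<sigma> b) \<and>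
     (\<forall>a b. \<sigma> (a * b) = \<sigma> b * \<sigma> a)"

definition admissible_pair :: "('k::division_ring \<Rightarrow> 'k) \<Rightarrow> 'k \<Rightarrow> bool" where
  "admissible_pair \<sigma> \<epsilon> \<longleftrightarrow> anti_automorphism \<sigma> \<and> \<epsilon> \<noteq> 0 \<and>
     \<sigma> \<epsilon> = inverse \<epsilon> \<and> (\<forall>t. \<sigma> (\<sigma> t) = \<epsilon> * t * inverse \<epsilon>)"

definition refl_sesq_form ::
  "('v::ab_group_add \<Rightarrow> 'k::division_ring \<Rightarrow> 'v) \<Rightarrow> ('k \<Rightarrow> 'k) \<Rightarrow> 'k \<Rightarrow> ('v \<Rightarrow> 'v \<Rightarrow> 'k) \<Rightarrow> bool" where
  "refl_sesq_form smul \<sigma> \<epsilon> \<phi> \<longleftrightarrow>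
     (\<forall>x y z \<alpha> \<beta>. \<phi> x (smul y \<alpha> + smul z \<beta>) = \<phi> x y * \<alpha> + \<phi> x z * \<beta>) \<and>
     (\<forall>x y. \<phi> y x = \<sigma> (\<phi> x y) * \<epsilon>)"

definition isotropic :: "('v \<Rightarrow> 'v \<Rightarrow> 'k::zero) \<Rightarrow> 'v \<Rightarrow> bool" where
  "isotropic \<phi> a \<longleftrightarrow> \<phi> a a = 0"

definition Rad :: "('v \<Rightarrow> 'v \<Rightarrow> 'k::zero) \<Rightarrow> 'v set" where
  "Rad \<phi> = {a. \<forall>x. \<phi> a x = 0}"

definition trace_valued :: "('k::division_ring \<Rightarrow> 'k) \<Rightarrow> 'k \<Rightarrow> ('v \<Rightarrow> 'v \<Rightarrow> 'k) \<Rightarrow> bool" where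
  "trace_valued \<sigma> \<epsilon> \<phi> \<longleftrightarrow> (\<forall>x. \<phi> x x \<in> {t + \<sigma> t * \<epsilon> | t. True})"

inductive_set rspan :: "('v::ab_group_add \<Rightarrow> 'k \<Rightarrow> 'v) \<Rightarrow> 'v set \<Rightarrow> 'v set"
  for smul :: "'v \<Rightarrow> 'k \<Rightarrow> 'v" and S :: "'v set" where
  rspan_zero: "0 \<in> rspan smul S"
| rspan_base: "x \<in> S \<Longrightarrow> x \<in> rspan smul S"
| rspan_add: "x \<in> rspan smul S \<Longrightarrow> y \<in> rspan smul S \<Longrightarrow> x + y \<in> rspan smul S"
| rspan_smul: "x \<in> rspan smul S \<Longrightarrow> smul x a \<in> rspan smul S"

end

theory Submission
  imports Defs
begin

text \<open>If the isotropic vectors span V, the diagonal values of \<phi> stay in the set of traces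
  t + \<sigma>(t) \<epsilon>, which is closed under sums and under s \<mapsto> \<sigma>(a) s a; and since Rad \<phi> is a
  subspace and \<phi> \<noteq> 0, not every isotropic vector can lie in it.
  Conversely, given an isotropic a outside the radical and a trace-valued form, every v
  with \<phi>(a,v) \<noteq> 0 can be moved to an isotropic vector v + a l, by cancelling the trace
  \<phi>(v,v) against the trace produced by the cross terms; a vector v with \<phi>(a,v) = 0 is the
  difference of two such vectors v + x and x.\<close>

definition traces :: "('k::division_ring \<Rightarrow> 'k) \<Rightarrow> 'k \<Rightarrow> 'k set" where
  "traces \<sigma> \<epsilon> = {t + \<sigma> t * \<epsilon> | t. True}"

lemma trace_valued_iff_traces: "trace_valued \<sigma> \<epsilon> \<phi> \<longleftrightarrow> (\<forall>x. \<phi> x x \<in> traces \<sigma> \<epsilon>)"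
  unfolding trace_valued_def traces_def ..

locale admissible =
  fixes \<sigma> :: "'k::division_ring \<Rightarrow> 'k" and \<epsilon> :: 'k
  assumes admissible: "admissible_pair \<sigma> \<epsilon>"
begin

lemma sigma_add: "\<sigma> (a + b) = \<sigma> a + \<sigma> b"
  and sigma_mult: "\<sigma> (a * b) = \<sigma> b * \<sigma> a"
  and sigma_sigma: "\<sigma> (\<sigma> a) = \<epsilon> * a * inverse \<epsilon>"
  and eps_nonzero: "\<epsilon> \<noteq> 0"
  and inj_sigma: "inj \<sigma>"
  using admissible unfolding admissible_pair_def anti_automorphism_def bij_def by blast+

lemma sigma_zero [simp]: "\<sigma> 0 = 0"
  using sigma_add[of 0 0] by simp

lemma sigma_minus: "\<sigma> (- a) = - \<sigma> a"
  using sigma_add[of a "- a"] by (simp add: eq_neg_iff_add_eq_0 add.commute)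

lemma sigma_eq_0_iff [simp]: "\<sigma> a = 0 \<longleftrightarrow> a = 0"
  using inj_sigma by (metis injD sigma_zero)

lemma sigma_sigma_mult_eps: "\<sigma> (\<sigma> a) * \<epsilon> = \<epsilon> * a"
  using eps_nonzero by (simp add: sigma_sigma mult.assoc)

lemma trace_in_traces: "t + \<sigma> t * \<epsilon> \<in> traces \<sigma> \<epsilon>"
  unfolding traces_def by blast

lemma zero_in_traces: "0 \<in> traces \<sigma> \<epsilon>"
  using trace_in_traces[of 0] by simp

lemma traces_add: "s \<in> traces \<sigma> \<epsilon> \<Longrightarrow> s' \<in> traces \<sigma> \<epsilon> \<Longrightarrow> s + s' \<in> traces \<sigma> \<epsilon>"
  unfolding traces_def by clarify (metis (no_types, lifting) sigma_add distrib_right add.assoc add.left_commute)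

lemma traces_sandwich:
  assumes "s \<in> traces \<sigma> \<epsilon>"
  shows "\<sigma> a * s * a \<in> traces \<sigma> \<epsilon>"
proof -
  obtain t where "s = t + \<sigma> t * \<epsilon>" using assms unfolding traces_def by blast
  then have "\<sigma> a * s * a = \<sigma> a * t * a + \<sigma> a * \<sigma> t * (\<sigma> (\<sigma> a) * \<epsilon>)"
    by (simp add: sigma_sigma_mult_eps algebra_simps)
  also have "\<dots> = \<sigma> a * t * a + \<sigma> (\<sigma> a * t * a) * \<epsilon>"
    by (simp add: sigma_mult mult.assoc)
  finally show ?thesis using trace_in_traces by simp
qed

end

locale sesq_space = admissible \<sigma> \<epsilon>
  for smul :: "'v::ab_group_add \<Rightarrow> 'k::division_ring \<Rightarrow> 'v" and \<sigma> \<epsilon> and \<phi> :: "'v \<Rightarrow> 'v \<Rightarrow> 'k" +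
  assumes vector_space: "right_vector_space smul"
    and form: "refl_sesq_form smul \<sigma> \<epsilon> \<phi>"
begin

lemma smul_one: "smul x 1 = x"
  using vector_space unfolding right_vector_space_def by blast

lemma smul_zero: "smul x 0 = 0"
  using vector_space unfolding right_vector_space_def by (metis add_0 add_cancel_right_right)

lemma smul_minus: "smul x (- a) = - smul x a"
  using vector_space unfolding right_vector_space_def
  by (metis add.right_inverse smul_zero eq_neg_iff_add_eq_0)

lemma rspan_diff: "x \<in> rspan smul S \<Longrightarrow> y \<in> rspan smul S \<Longrightarrow> x - y \<in> rspan smul S"
proof -
  assume "x \<in> rspan smul S" "y \<in> rspan smul S"
  then have "x + smul y (- 1) \<in> rspan smul S" by (blast intro: rspan_add rspan_smul)
  then show ?thesis by (simp add: smul_minus smul_one)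
qed

lemma form_linear: "\<phi> x (smul y \<alpha> + smul z \<beta>) = \<phi> x y * \<alpha> + \<phi> x z * \<beta>"
  and form_reflexive: "\<phi> y x = \<sigma> (\<phi> x y) * \<epsilon>"
  using form unfolding refl_sesq_form_def by blast+

lemma form_add_right: "\<phi> x (y + z) = \<phi> x y + \<phi> x z"
  using form_linear[of x y 1 z 1] by (simp add: smul_one)

lemma form_smul_right: "\<phi> x (smul y \<alpha>) = \<phi> x y * \<alpha>"
  using form_linear[of x y \<alpha> _ 0] by (simp add: smul_zero)

lemma form_add_left: "\<phi> (y + z) x = \<phi> y x + \<phi> z x"
  by (metis form_reflexive form_add_right sigma_add distrib_right)

lemma form_smul_left: "\<phi> (smul y \<alpha>) x = \<sigma> \<alpha> * \<phi> y x"
  by (metis form_reflexive form_smul_right sigma_mult mult.assoc)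

lemma form_zero_right [simp]: "\<phi> x 0 = 0"
  using form_add_right[of x 0 0] by simp

lemma form_zero_left [simp]: "\<phi> 0 x = 0"
  by (metis form_reflexive form_zero_right sigma_zero mult_zero_left)

lemma form_diag_add: "\<phi> (x + y) (x + y) = \<phi> x x + \<phi> y y + (\<phi> x y + \<sigma> (\<phi> x y) * \<epsilon>)"
  by (simp add: form_add_left form_add_right form_reflexive[of y x] ac_simps)

lemma form_diag_smul: "\<phi> (smul x a) (smul x a) = \<sigma> a * \<phi> x x * a"
  by (simp add: form_smul_left form_smul_right mult.assoc)

lemma form_diag_rspan_traces:
  assumes "\<forall>s\<in>S. \<phi> s s \<in> traces \<sigma> \<epsilon>" and "x \<in> rspan smul S"
  shows "\<phi> x x \<in> traces \<sigma> \<epsilon>"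
  using assms(2)
proof induction
  case rspan_zero
  then show ?case by (simp add: zero_in_traces)
next
  case (rspan_base x)
  then show ?case using assms(1) by blast
next
  case (rspan_add x y)
  then show ?case by (simp add: form_diag_add traces_add trace_in_traces)
next
  case (rspan_smul x a)
  then show ?case by (simp add: form_diag_smul traces_sandwich)
qed

lemma trace_valued_if_isotropic_span:
  assumes "rspan smul {a. isotropic \<phi> a} = UNIV"
  shows "trace_valued \<sigma> \<epsilon> \<phi>"
  unfolding trace_valued_iff_traces
  using form_diag_rspan_traces[of "{a. isotropic \<phi> a}"] assms
  by (simp add: isotropic_def zero_in_traces)

lemma rspan_subset_Rad: "S \<subseteq> Rad \<phi> \<Longrightarrow> rspan smul S \<subseteq> Rad \<phi>"
proof
  fix x assume S: "S \<subseteq> Rad \<phi>" and x: "x \<in> rspan smul S"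
  from x show "x \<in> Rad \<phi>"
    by induction (use S in \<open>auto simp: Rad_def form_add_left form_smul_left\<close>)
qed

lemma isotropic_shift:
  assumes "trace_valued \<sigma> \<epsilon> \<phi>" and "isotropic \<phi> a" and "\<phi> a v \<noteq> 0"
  shows "\<exists>l. isotropic \<phi> (v + smul a l)"
proof -
  obtain t where t: "\<phi> v v = t + \<sigma> t * \<epsilon>"
    using assms(1) unfolding trace_valued_def by blast
  define c where "c = \<phi> v a"
  have "c \<noteq> 0" using assms(3) form_reflexive[of a v] unfolding c_def by auto
  define l where "l = - (inverse c * t)"
  have cl: "c * l = - t"
    using \<open>c \<noteq> 0\<close> unfolding l_def by (simp add: mult.assoc[symmetric])
  have "\<phi> (v + smul a l) (v + smul a l) = \<phi> v v + \<sigma> l * \<phi> a a * l + (c * l + \<sigma> (c * l) * \<epsilon>)"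
    unfolding form_diag_add form_diag_smul by (simp add: form_smul_right c_def)
  also have "\<dots> = 0"
    using assms(2) t cl by (simp add: isotropic_def sigma_minus)
  finally show ?thesis unfolding isotropic_def by blast
qed

lemma isotropic_span_if_nonradical:
  assumes "trace_valued \<sigma> \<epsilon> \<phi>" and "isotropic \<phi> a" and "a \<notin> Rad \<phi>"
  shows "rspan smul {a. isotropic \<phi> a} = UNIV"
proof -
  let ?W = "rspan smul {a. isotropic \<phi> a}"
  have a_in: "a \<in> ?W" using assms(2) by (simp add: rspan_base)
  have nondeg_in: "v \<in> ?W" if nz: "\<phi> a v \<noteq> 0" for v
  proof -
    obtain l where "isotropic \<phi> (v + smul a l)"
      using isotropic_shift[OF assms(1,2) nz] by blast
    then have "(v + smul a l) - smul a l \<in> ?W"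
      using a_in by (blast intro: rspan_diff rspan_base rspan_smul)
    then show ?thesis by simp
  qed
  obtain x where x: "\<phi> a x \<noteq> 0" using assms(3) unfolding Rad_def by blast
  have "v \<in> ?W" for v
  proof (cases "\<phi> a v = 0")
    case True
    then have "(v + x) - x \<in> ?W"
      using x by (intro rspan_diff nondeg_in) (simp_all add: form_add_right)
    then show ?thesis by simp
  qed (rule nondeg_in)
  then show ?thesis by blast
qed

end

theorem mainTheorem4:
  fixes smul :: "'v::ab_group_add \<Rightarrow> 'k::division_ring \<Rightarrow> 'v"
    and \<sigma> :: "'k \<Rightarrow> 'k" and \<epsilon> :: 'k and \<phi> :: "'v \<Rightarrow> 'v \<Rightarrow> 'k"
  assumes "right_vector_space smul"
    and "admissible_pair \<sigma> \<epsilon>"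
    and "refl_sesq_form smul \<sigma> \<epsilon> \<phi>"
    and "\<exists>x y. \<phi> x y \<noteq> 0"
    and "\<exists>a. a \<noteq> 0 \<and> isotropic \<phi> a"
  shows "rspan smul {a. isotropic \<phi> a} = UNIV \<longleftrightarrow>
         (trace_valued \<sigma> \<epsilon> \<phi> \<and> (\<exists>a. isotropic \<phi> a \<and> a \<notin> Rad \<phi>))"
proof -
  interpret sesq_space smul \<sigma> \<epsilon> \<phi>
    using assms(1-3) by unfold_locales
  have "\<exists>a. isotropic \<phi> a \<and> a \<notin> Rad \<phi>" if span: "rspan smul {a. isotropic \<phi> a} = UNIV"
  proof (rule ccontr)
    assume "\<nexists>a. isotropic \<phi> a \<and> a \<notin> Rad \<phi>"
    then have "Rad \<phi> = UNIV" using rspan_subset_Rad[of "{a. isotropic \<phi> a}"] span by blast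
    then show False using assms(4) unfolding Rad_def by blast
  qed
  then show ?thesis
    using trace_valued_if_isotropic_span isotropic_span_if_nonradical by blast
qed

end
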